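(* Let $(\mathbf{S},\leq,\land,\mid,\mathsf{U})$ be a specification theory as described in the context, and assume moreover that parallel composition is idempotent in the sense that $A\leq A\mid A$ for all $A\in\mathbf{S}$. Then for all $A,B,C\in\mathbf{S}$ we have $(A\mid B)\mid C\leq A\mid(B\mid C)$, and consequently also $A\mid(B\mid C)\leq(A\mid B)\mid C$.
   Context: A specification theory consists of a set $\mathbf{S}$ (the specifications) with: a binary relation $\leq\ \subseteq \mathbf{S}\times\mathbf{S}$ (refinement) which is a preorder (reflexive and transitive); a universal specification $\mathsf{U}\in\mathbf{S}$ with $A\leq\mathsf{U}$ for all $A\in\mathbf{S}$; a total binary operation $\land:\mathbf{S}\times\mathbf{S}\to\mathbf{S}$ (conjunction) such that for all $A,B,C\in\mathbf{S}$: $A\land B\leq B\land A$, $A\land B\leq A$, $A\land B\leq B$, and if $C\leq A$ and $C\leq B$ then $C\leq A\land B$ (i.e. $\land$ is a greatest lower bound); a total binary operation $\mid:\mathbf{S}\times\mathbf{S}\to\mathbf{S}$ (parallel composition) such that for all $A,B,C\in\mathbf{S}$: $A\mid B\leq B\mid A$ (commutativity), and $A\leq B$ implies $A\mid C\leq B\mid C$ (precongruence); and moreover $A\mid\mathsf{U}\leq A$ for all $A\in\mathbf{S}$. *)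

theory Defs
  imports Main
begin

text \<open>A specification theory: the set of specifications is the type 'a;
  ref = refinement, U = universal specification, cnj = conjunction,
  par = parallel composition.\<close>
definition spec_theory ::
  "('a \<Rightarrow> 'a \<Rightarrow> bool) \<Rightarrow> 'a \<Rightarrow> ('a \<Rightarrow> 'a \<Rightarrow> 'a) \<Rightarrow> ('a \<Rightarrow> 'a \<Rightarrow> 'a) \<Rightarrow> bool" where
  "spec_theory ref U cnj par \<longleftrightarrow>
     (\<forall>A. ref A A) \<and>
     (\<forall>A B C. ref A B \<longrightarrow> ref B C \<longrightarrow> ref A C) \<and>
     (\<forall>A. ref A U) \<and>
     (\<forall>A B. ref (cnj A B) (cnj B A)) \<and>
     (\<forall>A B. ref (cnj A B) A) \<and>
     (\<forall>A B. ref (cnj A B) B) \<and>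
     (\<forall>A B C. ref C A \<longrightarrow> ref C B \<longrightarrow> ref C (cnj A B)) \<and>
     (\<forall>A B. ref (par A B) (par B A)) \<and>
     (\<forall>A B C. ref A B \<longrightarrow> ref (par A C) (par B C)) \<and>
     (\<forall>A. ref (par A U) A)"

end

theory Submission
  imports Defs
begin

(* The proof shows that, under idempotence, parallel composition is itself a
   greatest lower bound with respect to refinement, and glb operations are
   associative up to mutual refinement:
   - commutativity and left precongruence give precongruence in both arguments;
   - composing with U on one side shows A | B refines both A and B;
   - idempotence D <= D | D together with monotonicity shows that any common
     refinement D of A and B refines A | B.
   With A | B a lower bound and the greatest one, both bracketings of A | B | C
   are refined by the other, since each refines A, B and C. *)

locale specification_theory =
  fixes ref :: "'a \<Rightarrow> 'a \<Rightarrow> bool" and U :: 'a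
    and cnj par :: "'a \<Rightarrow> 'a \<Rightarrow> 'a"
  assumes axioms: "spec_theory ref U cnj par"
begin

lemma ref_trans: "ref x y \<Longrightarrow> ref y z \<Longrightarrow> ref x z"
  using axioms unfolding spec_theory_def by blast

lemma ref_U: "ref x U"
  using axioms unfolding spec_theory_def by blast

lemma par_commute: "ref (par x y) (par y x)"
  using axioms unfolding spec_theory_def by blast

lemma par_mono_left: "ref x y \<Longrightarrow> ref (par x z) (par y z)"
  using axioms unfolding spec_theory_def by blast

lemma par_U: "ref (par x U) x"
  using axioms unfolding spec_theory_def by blast

text \<open>Precongruence in the right argument, obtained by commuting around the left one.\<close>
lemma par_mono_right: "ref x y \<Longrightarrow> ref (par z x) (par z y)"
  by (rule ref_trans[OF par_commute ref_trans[OF par_mono_left par_commute]])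

lemma par_mono: "ref x x' \<Longrightarrow> ref y y' \<Longrightarrow> ref (par x y) (par x' y')"
  by (rule ref_trans[OF par_mono_left par_mono_right])

text \<open>A parallel composition refines each of its components: compare with
  the composition with the universal specification.\<close>
lemma par_lower_left: "ref (par x y) x"
  using par_mono_right[OF ref_U] par_U by (rule ref_trans)

lemma par_lower_right: "ref (par x y) y"
  by (rule ref_trans[OF par_commute par_lower_left])

lemma par_greatest:
  assumes idem: "\<And>A. ref A (par A A)"
    and "ref d x" and "ref d y"
  shows "ref d (par x y)"
  using idem par_mono[OF assms(2,3)] by (rule ref_trans)

text \<open>Both bracketings of a triple refine each other, as each refines all three components.\<close>
lemma par_assoc:
  assumes idem: "\<And>A. ref A (par A A)"
  shows "ref (par (par a b) c) (par a (par b c))"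
    and "ref (par a (par b c)) (par (par a b) c)"
proof -
  let ?L = "par (par a b) c" and ?R = "par a (par b c)"
  have "ref ?L a" "ref ?L b" "ref ?L c"
    using ref_trans[OF par_lower_left par_lower_left]
      ref_trans[OF par_lower_left par_lower_right] par_lower_right .
  then show "ref ?L ?R"
    by (intro par_greatest[OF idem])
next
  let ?R = "par a (par b c)"
  have "ref ?R a" "ref ?R b" "ref ?R c"
    using par_lower_left ref_trans[OF par_lower_right par_lower_left]
      ref_trans[OF par_lower_right par_lower_right] .
  then show "ref ?R (par (par a b) c)"
    by (intro par_greatest[OF idem])
qed

end

theorem theorem6:
  fixes ref :: "'a \<Rightarrow> 'a \<Rightarrow> bool" and U :: 'a
    and cnj par :: "'a \<Rightarrow> 'a \<Rightarrow> 'a"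
  assumes "spec_theory ref U cnj par"
    and "\<And>A. ref A (par A A)"
  shows "\<forall>A B C. ref (par (par A B) C) (par A (par B C))
           \<and> ref (par A (par B C)) (par (par A B) C)"
proof -
  interpret specification_theory ref U cnj par
    using assms(1) by unfold_locales
  show ?thesis
    using par_assoc[OF assms(2)] by blast
qed

end
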